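(* For a positive integer $N$, let $\mathcal S_2$ be the set of pairs $(A,B)$ of $3\times 3$ matrices with entries in $[-N,N]\cap\mathbb{Z}$, written \[ A = \begin{pmatrix} a_1 & a_2 & a_3 \\ a_4 & a_5 & a_6 \\ a_7 & a_8 & a_9 \end{pmatrix},\qquad B = \begin{pmatrix} b_1 & b_2 & b_3 \\ b_4 & b_5 & b_6 \\ b_7 & b_8 & b_9 \end{pmatrix}, \] such that $AB=BA$ and the $6\times 4$ matrix \[ M = \begin{pmatrix} -b_2 & a_2 & 0 & 0 \\ b_4 & -a_4 & 0 & 0 \\ 0 & 0 & -b_3 & a_3 \\ 0 & 0 & b_7 & -a_7 \\ b_8 & -a_8 & -b_8 & a_8 \\ -b_6 & a_6 & b_6 & -a_6 \end{pmatrix} \] has rank $2$. Then $|\mathcal S_2|\le CN^{10}$ for an absolute constant $C>0$ and all $N\ge 1$. *)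

theory Defs
  imports "HOL-Analysis.Analysis"
begin

text \<open>Entries of a 3x3 integer matrix A, numbered a_1..a_9 row-wise.
  Rows/columns are indexed by the type 3 with elements 1, 2, 3.\<close>
definition ent :: "int^3^3 \<Rightarrow> nat \<Rightarrow> int" where
  "ent A k = A $ (of_nat ((k - 1) div 3 + 1)) $ (of_nat ((k - 1) mod 3 + 1))"

text \<open>The 6x4 matrix M built from A and B (real entries, to use the library rank).\<close>
definition Mmat :: "int^3^3 \<Rightarrow> int^3^3 \<Rightarrow> real^4^6" where
  "Mmat A B = (let a = (\<lambda>k. real_of_int (ent A k)); b = (\<lambda>k. real_of_int (ent B k));
     rows = [[- b 2, a 2, 0, 0],
             [b 4, - a 4, 0, 0],
             [0, 0, - b 3, a 3],
             [0, 0, b 7, - a 7],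
             [b 8, - a 8, - b 8, a 8],
             [- b 6, a 6, b 6, - a 6]]
   in (\<chi> i j. rows ! (nat (Rep_bit0 i)) ! (nat (Rep_bit0 j))))"

definition S2 :: "nat \<Rightarrow> ((int^3^3) \<times> (int^3^3)) set" where
  "S2 N = {p. (\<forall>i j. \<bar>fst p $ i $ j\<bar> \<le> int N \<and> \<bar>snd p $ i $ j\<bar> \<le> int N)
                  \<and> fst p ** snd p = snd p ** fst p \<and> rank (Mmat (fst p) (snd p)) = 2}"

end

theory Submission
  imports Defs
begin

text \<open>
  Write \<open>w\<^sub>k = (a\<^sub>k, b\<^sub>k) \<in> \<int>\<^sup>2\<close> and let \<open>det2\<close> be the \<open>2 \<times> 2\<close> determinant. The six
  off-diagonal entries of \<open>AB = BA\<close> involve the diagonal only through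
  \<open>y\<^sub>1 = w\<^sub>5 - w\<^sub>1\<close> and \<open>y\<^sub>2 = w\<^sub>9 - w\<^sub>1\<close>, and say that \<open>y\<^sub>1\<close>, \<open>y\<^sub>2\<close> and \<open>y\<^sub>1 - y\<^sub>2\<close> lie on lines
  determined by the pairs \<open>U = (w\<^sub>2, w\<^sub>4)\<close>, \<open>V = (w\<^sub>3, w\<^sub>7)\<close>, \<open>W = (w\<^sub>8, w\<^sub>6)\<close>
  respectively; each line has \<open>O(N)\<close> lattice points once its pair is nonzero.
  The rows of \<open>M\<close> are these six vectors turned by a right angle and placed in the first
  block, the second block, or (with opposite signs) both blocks of \<open>\<real>\<^sup>4\<close>. Since the row
  space has dimension at most 2, a nonzero pair forces all vectors of the other two pairs
  onto one line through the origin.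

  So, apart from the \<open>O(N\<^sup>2)\<close> choices of \<open>w\<^sub>1\<close>: if at most one pair is nonzero there are
  \<open>O(N\<^sup>8)\<close> choices of \<open>(U, V, W, y\<^sub>1, y\<^sub>2)\<close> outright; if exactly two are nonzero, both are
  collinear pairs (\<open>O(N\<^sup>3)\<close> each) and two of \<open>y\<^sub>1, y\<^sub>2, y\<^sub>1 - y\<^sub>2\<close> lie on their lines; if all
  three are nonzero, all eight vectors are multiples of one primitive vector \<open>d\<close>, and the
  sum of \<open>(N / |d|\<^sub>\<infinity>)\<^sup>8\<close> over the primitive directions \<open>d\<close> is \<open>O(N\<^sup>8)\<close>.
\<close>

section \<open>Lattice points on lines in a square\<close>

type_synonym v2 = "int \<times> int"

definition det2 :: "v2 \<Rightarrow> v2 \<Rightarrow> int" where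
  "det2 u v = fst u * snd v - snd u * fst v"

definition grid :: "nat \<Rightarrow> v2 set" where
  "grid K = {- int K..int K} \<times> {- int K..int K}"

definition origin_collinear :: "v2 set \<Rightarrow> bool" where
  "origin_collinear S \<longleftrightarrow> (\<forall>x\<in>S. \<forall>y\<in>S. det2 x y = 0)"

lemma Pair_eq_0_iff: "(a, b) = 0 \<longleftrightarrow> a = 0 \<and> b = 0"
  by (simp add: zero_prod_def)

lemma det2_self [simp]: "det2 u u = 0"
  by (simp add: det2_def)

lemma det2_eq_0_commute: "det2 v u = 0 \<longleftrightarrow> det2 u v = 0"
  by (auto simp: det2_def mult.commute)

lemma det2_eq_0_trans:
  assumes "v \<noteq> 0" "det2 v a = 0" "det2 v b = 0"
  shows "det2 a b = 0"
proof -
  have "det2 a b * fst v = det2 v b * fst a - det2 v a * fst b"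
    "det2 a b * snd v = det2 v b * snd a - det2 v a * snd b"
    by (simp_all add: det2_def algebra_simps)
  then show ?thesis
    using assms by (auto simp: prod_eq_iff)
qed

lemma origin_collinear_4:
  "origin_collinear {a, b, c, d} \<longleftrightarrow>
     det2 a b = 0 \<and> det2 a c = 0 \<and> det2 a d = 0 \<and> det2 b c = 0 \<and> det2 b d = 0 \<and> det2 c d = 0"
  unfolding origin_collinear_def by (auto simp: det2_eq_0_commute)

lemma finite_grid [simp]: "finite (grid K)"
  by (simp add: grid_def)

lemma card_grid: "card (grid K) = (2 * K + 1) ^ 2"
proof -
  have "card {- int K..int K} = 2 * K + 1"
    by simp
  then show ?thesis
    by (simp add: grid_def card_cartesian_product power2_eq_square)
qed

lemma mem_grid_iff: "u \<in> grid K \<longleftrightarrow> \<bar>fst u\<bar> \<le> int K \<and> \<bar>snd u\<bar> \<le> int K"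
  by (auto simp: grid_def abs_le_iff mem_Times_iff)

lemma grid_mono: "K \<le> L \<Longrightarrow> grid K \<subseteq> grid L"
  by (auto simp: grid_def)

lemma diff_mem_grid: "u \<in> grid K \<Longrightarrow> v \<in> grid K \<Longrightarrow> u - v \<in> grid (2 * K)"
  by (auto simp: grid_def)

lemma card_line_le:
  assumes "u \<noteq> 0"
  shows "card {y \<in> grid K. det2 u y = c} \<le> 2 * K + 1"
proof -
  let ?L = "{y \<in> grid K. det2 u y = c}"
  define coord :: "v2 \<Rightarrow> int" where "coord y = (if fst u \<noteq> 0 then fst y else snd y)" for y
  have "inj_on coord ?L"
  proof (rule inj_onI)
    fix x y assume "x \<in> ?L" "y \<in> ?L" and eq: "coord x = coord y"
    then have "fst u * (snd x - snd y) = snd u * (fst x - fst y)"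
      by (simp add: det2_def algebra_simps)
    then show "x = y"
      using assms eq by (auto simp: coord_def prod_eq_iff split: if_splits)
  qed
  moreover have "coord ` ?L \<subseteq> {- int K..int K}"
    by (auto simp: coord_def grid_def)
  ultimately have "card ?L \<le> card {- int K..int K}"
    by (intro card_inj_on_le) auto
  then show ?thesis
    by simp
qed

lemma card_two_lines_le:
  assumes "u \<noteq> 0 \<or> v \<noteq> 0"
  shows "card {y \<in> grid K. det2 u y = c \<and> det2 v y = d} \<le> 2 * K + 1"
proof -
  obtain w e where "w \<noteq> 0" and sub: "{y \<in> grid K. det2 u y = c \<and> det2 v y = d} \<subseteq> {y \<in> grid K. det2 w y = e}"
    using assms by blast
  show ?thesis
    by (rule order_trans[OF card_mono[OF _ sub] card_line_le[OF \<open>w \<noteq> 0\<close>]]) simp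
qed

definition collinear_pairs :: "nat \<Rightarrow> (v2 \<times> v2) set" where
  "collinear_pairs K = {(u, v) \<in> grid K \<times> grid K. det2 u v = 0}"

lemma finite_collinear_pairs [simp]: "finite (collinear_pairs K)"
  by (rule finite_subset[of _ "grid K \<times> grid K"]) (auto simp: collinear_pairs_def)

lemma card_collinear_pairs_le: "card (collinear_pairs K) \<le> 2 * (2 * K + 1) ^ 3"
proof -
  let ?n = "2 * K + 1"
  let ?S = "SIGMA u:grid K - {0}. {y \<in> grid K. det2 u y = 0}"
  have "collinear_pairs K \<subseteq> {0} \<times> grid K \<union> ?S"
    by (auto simp: collinear_pairs_def)
  then have "card (collinear_pairs K) \<le> card ({0} \<times> grid K \<union> ?S)"
    by (rule card_mono[rotated]) auto
  also have "\<dots> \<le> card ({0::v2} \<times> grid K) + card ?S"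
    by (rule card_Un_le)
  also have "card ?S = (\<Sum>u\<in>grid K - {0}. card {y \<in> grid K. det2 u y = 0})"
    by (rule card_SigmaI) auto
  also have "\<dots> \<le> (\<Sum>u\<in>grid K - {0}. ?n)"
    by (intro sum_mono card_line_le) simp
  also have "\<dots> \<le> (\<Sum>u\<in>grid K. ?n)"
    by (rule sum_mono2) auto
  also have "\<dots> = ?n ^ 3"
    by (simp add: card_grid power2_eq_square power3_eq_cube)
  finally have "card (collinear_pairs K) \<le> ?n ^ 2 + ?n ^ 3"
    by (simp add: card_grid)
  also have "?n ^ 2 \<le> ?n ^ 3"
    by (rule power_increasing) auto
  finally show ?thesis
    by simp
qed

section \<open>Lattice points on lines through the origin\<close>

definition height :: "v2 \<Rightarrow> nat" where
  "height d = nat (max \<bar>fst d\<bar> \<bar>snd d\<bar>)"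

definition primitive_part :: "v2 \<Rightarrow> v2" where
  "primitive_part u = (fst u div gcd (fst u) (snd u), snd u div gcd (fst u) (snd u))"

definition ray :: "nat \<Rightarrow> v2 \<Rightarrow> v2 set" where
  "ray K d = {v \<in> grid K. \<exists>t. v = (t * fst d, t * snd d)}"

lemma collinear_imp_multiple_of_primitive_part:
  assumes "u \<noteq> 0" "det2 u v = 0"
  shows "\<exists>t. v = (t * fst (primitive_part u), t * snd (primitive_part u))"
proof -
  obtain p q where u: "u = (p, q)" by fastforce
  obtain x y where v: "v = (x, y)" by fastforce
  define g where "g = gcd p q"
  define p' q' where "p' = p div g" and "q' = q div g"
  have "g \<noteq> 0"
    using assms(1) u by (simp add: g_def zero_prod_def)
  have p: "p = g * p'" and q: "q = g * q'"
    by (simp_all add: g_def p'_def q'_def)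
  obtain r s where "r * p + s * q = g"
    using bezout_int[of p q] by (auto simp: g_def)
  then have "g * (r * p' + s * q') = g * 1"
    by (simp add: p q algebra_simps)
  then have bezout: "r * p' + s * q' = 1"
    using \<open>g \<noteq> 0\<close> by (simp only: mult_cancel_left) simp
  have "g * (p' * y) = g * (q' * x)"
    using assms(2) by (simp add: u v det2_def p q algebra_simps)
  then have eq: "p' * y = q' * x"
    using \<open>g \<noteq> 0\<close> by simp
  define t where "t = r * x + s * y"
  have "t * p' = x * (r * p' + s * q')" "t * q' = y * (r * p' + s * q')"
    by (simp_all add: t_def algebra_simps eq)
  then have "v = (t * p', t * q')"
    by (simp add: v bezout)
  then show ?thesis
    by (auto simp: u primitive_part_def g_def p'_def q'_def)
qed

lemma primitive_part_mem_grid: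
  assumes "u \<in> grid K" "u \<noteq> 0"
  shows "primitive_part u \<in> grid K" "primitive_part u \<noteq> 0"
proof -
  obtain p q where u: "u = (p, q)" by fastforce
  define g where "g = gcd p q"
  define p' q' where "p' = p div g" and "q' = q div g"
  have "g \<ge> 1"
    using assms(2) u by (simp add: g_def zero_prod_def int_one_le_iff_zero_less)
  have p: "p = g * p'" and q: "q = g * q'"
    by (simp_all add: g_def p'_def q'_def)
  have "\<bar>p'\<bar> \<le> \<bar>p\<bar>" "\<bar>q'\<bar> \<le> \<bar>q\<bar>"
    using \<open>g \<ge> 1\<close> by (simp_all add: p q abs_mult mult_le_cancel_right1)
  moreover have "primitive_part u = (p', q')"
    by (simp add: u primitive_part_def g_def p'_def q'_def)
  ultimately show "primitive_part u \<in> grid K" "primitive_part u \<noteq> 0"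
    using assms u p q by (auto simp: grid_def zero_prod_def)
qed

lemma card_ray_le:
  assumes "d \<in> grid K" "d \<noteq> 0"
  shows "real (card (ray K d)) \<le> 3 * real K / real (height d)"
proof -
  let ?h = "height d" and ?m = "K div height d"
  have "?h \<ge> 1" "?h \<le> K"
    using assms by (auto simp: height_def grid_def zero_prod_def)
  have "ray K d \<subseteq> (\<lambda>t. (t * fst d, t * snd d)) ` {- int ?m..int ?m}"
  proof
    fix v assume "v \<in> ray K d"
    then obtain t where t: "v = (t * fst d, t * snd d)" and "v \<in> grid K"
      by (auto simp: ray_def)
    then have "\<bar>t\<bar> * \<bar>fst d\<bar> \<le> int K" "\<bar>t\<bar> * \<bar>snd d\<bar> \<le> int K"
      by (auto simp: grid_def abs_mult abs_le_iff)
    then have "int (nat \<bar>t\<bar> * ?h) \<le> int K"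
      by (simp add: height_def max_def)
    then have "nat \<bar>t\<bar> \<le> ?m"
      using \<open>?h \<ge> 1\<close> by (simp add: less_eq_div_iff_mult_less_eq del: of_nat_mult)
    then show "v \<in> (\<lambda>t. (t * fst d, t * snd d)) ` {- int ?m..int ?m}"
      using t by (auto intro!: image_eqI[of _ _ t])
  qed
  then have "card (ray K d) \<le> card {- int ?m..int ?m}"
    by (intro order_trans[OF card_mono card_image_le]) auto
  then have "real (card (ray K d)) \<le> 2 * real ?m + 1"
    by simp
  also have "\<dots> \<le> 2 * (real K / real ?h) + real K / real ?h"
    using \<open>?h \<ge> 1\<close> \<open>?h \<le> K\<close> by (intro add_mono mult_left_mono of_nat_div_le_of_nat) auto
  finally show ?thesis
    by simp
qed

lemma sum_inverse_square_le:
  "(\<Sum>j\<in>{- int K..int K}. 1 / (max 1 \<bar>real_of_int j\<bar>)\<^sup>2) \<le> 5 - 4 / (real K + 1)"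
proof (induction K)
  case 0
  then show ?case by simp
next
  case (Suc K)
  have "{- int (Suc K)..int (Suc K)} = insert (- int (Suc K)) (insert (int (Suc K)) {- int K..int K})"
    by auto
  then have "(\<Sum>j\<in>{- int (Suc K)..int (Suc K)}. 1 / (max 1 \<bar>real_of_int j\<bar>)\<^sup>2)
      = 2 / (real K + 1)\<^sup>2 + (\<Sum>j\<in>{- int K..int K}. 1 / (max 1 \<bar>real_of_int j\<bar>)\<^sup>2)"
    by (simp add: add.commute)
  also have "\<dots> \<le> 2 / (real K + 1)\<^sup>2 + (5 - 4 / (real K + 1))"
    using Suc.IH by simp
  also have "\<dots> \<le> 5 - 4 / (real (Suc K) + 1)"
  proof -
    have "2 / (real K + 1)\<^sup>2 \<le> 4 / (real K + 1) - 4 / (real K + 2)"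
      by (simp add: divide_simps power2_eq_square)
    then show ?thesis
      by (simp add: add.commute)
  qed
  finally show ?case .
qed

lemma sum_inverse_height_le: "(\<Sum>d\<in>grid K - {0}. 1 / real (height d) ^ 4) \<le> 25"
proof -
  define f :: "int \<Rightarrow> real" where "f j = 1 / (max 1 \<bar>real_of_int j\<bar>)\<^sup>2" for j
  have f_nonneg: "f j \<ge> 0" for j
    by (simp add: f_def)
  have sum_f: "sum f {- int K..int K} \<le> 5"
    using sum_inverse_square_le[of K] divide_nonneg_nonneg[of 4 "real K + 1"] unfolding f_def[symmetric]
    by linarith
  have "1 / real (height d) ^ 4 \<le> f (fst d) * f (snd d)" if "d \<noteq> 0" for d
  proof -
    have h: "real (height d) = max \<bar>real_of_int (fst d)\<bar> \<bar>real_of_int (snd d)\<bar>" "real (height d) \<ge> 1"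
      using that by (auto simp: height_def zero_prod_def prod_eq_iff)
    then have "(max 1 \<bar>real_of_int (fst d)\<bar>)\<^sup>2 \<le> real (height d) ^ 2"
      "(max 1 \<bar>real_of_int (snd d)\<bar>)\<^sup>2 \<le> real (height d) ^ 2"
      by (auto intro: power_mono)
    then have "(max 1 \<bar>real_of_int (fst d)\<bar>)\<^sup>2 * (max 1 \<bar>real_of_int (snd d)\<bar>)\<^sup>2 \<le> real (height d) ^ 2 * real (height d) ^ 2"
      by (intro mult_mono) auto
    then have "(max 1 \<bar>real_of_int (fst d)\<bar>)\<^sup>2 * (max 1 \<bar>real_of_int (snd d)\<bar>)\<^sup>2 \<le> real (height d) ^ 4"
      by (simp flip: power_add)
    then show ?thesis
      unfolding f_def by (simp add: frac_le)
  qed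
  then have "(\<Sum>d\<in>grid K - {0}. 1 / real (height d) ^ 4) \<le> (\<Sum>d\<in>grid K - {0}. f (fst d) * f (snd d))"
    by (intro sum_mono) auto
  also have "\<dots> \<le> (\<Sum>d\<in>grid K. f (fst d) * f (snd d))"
    by (intro sum_mono2) (auto intro: mult_nonneg_nonneg f_nonneg)
  also have "\<dots> = sum f {- int K..int K} * sum f {- int K..int K}"
    by (simp add: grid_def sum_product sum.cartesian_product split_def)
  also have "\<dots> \<le> 5 * 5"
    using sum_f by (intro mult_mono) (auto intro: sum_nonneg f_nonneg)
  finally show ?thesis
    by simp
qed

lemma collinear_lists_subset_rays:
  "{xs. length xs = m \<and> set xs \<subseteq> grid K \<and> (\<exists>u\<in>set xs. u \<noteq> 0 \<and> (\<forall>x\<in>set xs. det2 u x = 0))}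
     \<subseteq> (\<Union>d\<in>grid K - {0}. {xs. set xs \<subseteq> ray K d \<and> length xs = m})"
proof
  fix xs assume "xs \<in> {xs. length xs = m \<and> set xs \<subseteq> grid K \<and>
                           (\<exists>u\<in>set xs. u \<noteq> 0 \<and> (\<forall>x\<in>set xs. det2 u x = 0))}"
  then obtain u where "u \<in> set xs" "u \<noteq> 0" and coll: "\<forall>x\<in>set xs. det2 u x = 0"
    and xs: "length xs = m" "set xs \<subseteq> grid K"
    by blast
  then have "u \<in> grid K"
    by blast
  have "set xs \<subseteq> ray K (primitive_part u)"
    using collinear_imp_multiple_of_primitive_part[OF \<open>u \<noteq> 0\<close>] coll xs(2)
    by (auto simp: ray_def)
  moreover have "primitive_part u \<in> grid K - {0}"
    using primitive_part_mem_grid[OF \<open>u \<in> grid K\<close> \<open>u \<noteq> 0\<close>] by simp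
  ultimately show "xs \<in> (\<Union>d\<in>grid K - {0}. {xs. set xs \<subseteq> ray K d \<and> length xs = m})"
    using xs(1) by blast
qed

lemma card_collinear_lists_le:
  assumes "m \<ge> 4"
  shows "real (card {xs. length xs = m \<and> set xs \<subseteq> grid K \<and>
                       (\<exists>u\<in>set xs. u \<noteq> 0 \<and> (\<forall>x\<in>set xs. det2 u x = 0))})
           \<le> 25 * (3 * real K) ^ m"
    (is "real (card ?S) \<le> _")
proof -
  let ?D = "grid K - {0}"
  let ?T = "\<lambda>d. {xs. set xs \<subseteq> ray K d \<and> length xs = m}"
  have "card ?S \<le> card (\<Union>d\<in>?D. ?T d)"
    by (rule card_mono[OF _ collinear_lists_subset_rays]) (auto simp: ray_def intro: finite_lists_length_eq)
  also have "\<dots> \<le> (\<Sum>d\<in>?D. card (?T d))"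
    by (rule card_UN_le) simp
  also have "\<dots> = (\<Sum>d\<in>?D. card (ray K d) ^ m)"
    by (intro sum.cong refl card_lists_length_eq) (simp add: ray_def)
  finally have "real (card ?S) \<le> (\<Sum>d\<in>?D. real (card (ray K d)) ^ m)"
    by (simp flip: of_nat_sum of_nat_power)
  also have "\<dots> \<le> (\<Sum>d\<in>?D. (3 * real K) ^ m * (1 / real (height d) ^ 4))"
  proof (rule sum_mono)
    fix d assume d: "d \<in> ?D"
    then have "height d \<ge> 1"
      by (auto simp: height_def zero_prod_def prod_eq_iff)
    have "real (card (ray K d)) ^ m \<le> (3 * real K / real (height d)) ^ m"
      using d card_ray_le by (intro power_mono) auto
    also have "\<dots> = (3 * real K) ^ m * (1 / real (height d) ^ m)"
      by (simp add: power_divide)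
    also have "\<dots> \<le> (3 * real K) ^ m * (1 / real (height d) ^ 4)"
      using \<open>height d \<ge> 1\<close> assms
      by (intro mult_left_mono divide_left_mono power_increasing) auto
    finally show "real (card (ray K d)) ^ m \<le> (3 * real K) ^ m * (1 / real (height d) ^ 4)" .
  qed
  also have "\<dots> = (3 * real K) ^ m * (\<Sum>d\<in>?D. 1 / real (height d) ^ 4)"
    by (simp add: sum_distrib_left)
  also have "\<dots> \<le> (3 * real K) ^ m * 25"
    by (intro mult_left_mono sum_inverse_height_le) simp
  finally show ?thesis
    by simp
qed

section \<open>Matrices of rank at most two\<close>

lemma row_mem_rows: "M $ i \<in> rows M"
  unfolding rows_def row_def by auto

lemma rank_le_2_functional_minor:
  fixes M :: "real^'n^'m" and l l' :: "real^'n"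
  assumes "rank M \<le> 2" "M $ i \<noteq> 0" "l \<bullet> M $ i = 0" "l' \<bullet> M $ i = 0"
  shows "(l \<bullet> M $ j) * (l' \<bullet> M $ k) = (l' \<bullet> M $ j) * (l \<bullet> M $ k)"
proof (rule ccontr)
  \<comment> \<open>\<open>l\<close> and \<open>l'\<close> vanish on \<open>M $ i\<close> but separate \<open>M $ j\<close> from \<open>M $ k\<close>, so the three rows are independent\<close>
  let ?x = "M $ i" and ?y = "M $ j" and ?z = "M $ k"
  assume minor: "(l \<bullet> ?y) * (l' \<bullet> ?z) \<noteq> (l' \<bullet> ?y) * (l \<bullet> ?z)"
  have "?y \<notin> span {?z}"
    using minor by (auto simp: span_singleton)
  have "?x \<notin> span {?y, ?z}"
  proof
    assume "?x \<in> span {?y, ?z}"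
    then obtain a b where x: "?x = a *\<^sub>R ?y + b *\<^sub>R ?z"
      by (auto simp: span_insert span_singleton algebra_simps)
    have "a * (l \<bullet> ?y) + b * (l \<bullet> ?z) = 0" "a * (l' \<bullet> ?y) + b * (l' \<bullet> ?z) = 0"
      using assms(3,4) by (simp_all add: x inner_add_right)
    then have "a = 0" "b = 0"
      using minor by algebra+
    then show False
      using x assms(2) by simp
  qed
  have "?z \<noteq> 0"
    using minor by auto
  then have "independent {?x, ?y, ?z}"
    using \<open>?x \<notin> span {?y, ?z}\<close> \<open>?y \<notin> span {?z}\<close>
    by (intro independent_insertI) (auto simp: independent_empty)
  moreover have "card {?x, ?y, ?z} = 3"
    using \<open>?x \<notin> span {?y, ?z}\<close> \<open>?y \<notin> span {?z}\<close> by (auto intro: span_base simp: card_insert_if)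
  ultimately have "3 \<le> dim (rows M)"
    by (metis independent_card_le_dim row_mem_rows empty_subsetI insert_subset)
  then show False
    using assms(1) by (simp add: row_rank_def)
qed

section \<open>The commutation equations and the rank relations\<close>

definition entry_pair :: "int^3^3 \<Rightarrow> int^3^3 \<Rightarrow> nat \<Rightarrow> v2" where
  "entry_pair A B k = (ent A k, ent B k)"

definition comm_equations :: "v2 \<Rightarrow> v2 \<Rightarrow> v2 \<Rightarrow> v2 \<Rightarrow> v2 \<Rightarrow> v2 \<Rightarrow> v2 \<Rightarrow> v2 \<Rightarrow> bool" where
  "comm_equations w2 w4 w3 w7 w8 w6 y1 y2 \<longleftrightarrow>
     det2 w2 y1 + det2 w3 w8 = 0 \<and> det2 w4 y1 = det2 w6 w7 \<and>
     det2 w3 y2 + det2 w2 w6 = 0 \<and> det2 w7 y2 = det2 w8 w4 \<and>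
     det2 w6 (y1 - y2) = det2 w4 w3 \<and> det2 w8 (y1 - y2) + det2 w7 w2 = 0"

lemma commute_imp_comm_equations:
  assumes "A ** B = B ** A"
  defines "w \<equiv> entry_pair A B"
  shows "comm_equations (w 2) (w 4) (w 3) (w 7) (w 8) (w 6) (w 5 - w 1) (w 9 - w 1)"
proof -
  have "(A ** B) $ i $ j = (B ** A) $ i $ j" for i j
    using assms(1) by simp
  from this[of 1 2] this[of 2 1] this[of 1 3] this[of 3 1] this[of 2 3] this[of 3 2] show ?thesis
    by (simp add: comm_equations_def det2_def w_def entry_pair_def ent_def matrix_matrix_mult_def sum_3)
      (simp add: algebra_simps)
qed

lemma matrix_eqI_ent:
  fixes A A' :: "int^3^3"
  assumes "\<And>k. k \<in> {1..9} \<Longrightarrow> ent A k = ent A' k"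
  shows "A = A'"
proof -
  have "A $ i $ j = A' $ i $ j" for i j
    using exhaust_3[of i] exhaust_3[of j] assms[of 1] assms[of 2] assms[of 3] assms[of 4] assms[of 5]
      assms[of 6] assms[of 7] assms[of 8] assms[of 9]
    by (auto simp: ent_def)
  then show ?thesis
    by (simp add: vec_eq_iff)
qed

definition rank_relations :: "v2 \<Rightarrow> v2 \<Rightarrow> v2 \<Rightarrow> v2 \<Rightarrow> v2 \<Rightarrow> v2 \<Rightarrow> bool" where
  "rank_relations w2 w4 w3 w7 w8 w6 \<longleftrightarrow>
     ((w2, w4) \<noteq> 0 \<longrightarrow> origin_collinear {w3, w7, w8, w6}) \<and>
     ((w3, w7) \<noteq> 0 \<longrightarrow> origin_collinear {w2, w4, w8, w6}) \<and>
     ((w8, w6) \<noteq> 0 \<longrightarrow> origin_collinear {w2, w4, w3, w7})"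

lemma det2_eq_0_iff_real:
  "det2 u v = 0 \<longleftrightarrow> real_of_int (fst u) * real_of_int (snd v) = real_of_int (snd u) * real_of_int (fst v)"
  by (simp add: det2_def flip: of_int_mult)

lemmas Mmat_entries = Mmat_def bit0.Rep_numeral bit0.Rep_0 bit0.Rep_1

lemma Mmat_rows_nonzero:
  fixes A B :: "int^3^3"
  defines "w \<equiv> entry_pair A B"
  shows "w 2 \<noteq> 0 \<Longrightarrow> Mmat A B $ 0 \<noteq> 0" and "w 4 \<noteq> 0 \<Longrightarrow> Mmat A B $ 1 \<noteq> 0"
    and "w 3 \<noteq> 0 \<Longrightarrow> Mmat A B $ 2 \<noteq> 0" and "w 7 \<noteq> 0 \<Longrightarrow> Mmat A B $ 3 \<noteq> 0"
    and "w 8 \<noteq> 0 \<Longrightarrow> Mmat A B $ 4 \<noteq> 0" and "w 6 \<noteq> 0 \<Longrightarrow> Mmat A B $ 5 \<noteq> 0"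
proof -
  have row_nonzero: "x $ a \<noteq> 0 \<or> x $ b \<noteq> 0 \<Longrightarrow> x \<noteq> 0" for x :: "real^4" and a b
    by auto
  have "w k \<noteq> 0 \<longleftrightarrow> ent A k \<noteq> 0 \<or> ent B k \<noteq> 0" for k
    by (simp add: w_def entry_pair_def zero_prod_def)
  then show "w 2 \<noteq> 0 \<Longrightarrow> Mmat A B $ 0 \<noteq> 0" and "w 4 \<noteq> 0 \<Longrightarrow> Mmat A B $ 1 \<noteq> 0"
    and "w 3 \<noteq> 0 \<Longrightarrow> Mmat A B $ 2 \<noteq> 0" and "w 7 \<noteq> 0 \<Longrightarrow> Mmat A B $ 3 \<noteq> 0"
    and "w 8 \<noteq> 0 \<Longrightarrow> Mmat A B $ 4 \<noteq> 0" and "w 6 \<noteq> 0 \<Longrightarrow> Mmat A B $ 5 \<noteq> 0"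
    using row_nonzero[of "Mmat A B $ 0" 0 1] row_nonzero[of "Mmat A B $ 1" 0 1]
      row_nonzero[of "Mmat A B $ 2" 2 3] row_nonzero[of "Mmat A B $ 3" 2 3]
      row_nonzero[of "Mmat A B $ 4" 0 1] row_nonzero[of "Mmat A B $ 5" 0 1]
    by (auto simp: Mmat_entries)
qed

lemma rank_Mmat_le_2_imp_rank_relations:
  assumes "rank (Mmat A B) \<le> 2"
  defines "w \<equiv> entry_pair A B"
  shows "rank_relations (w 2) (w 4) (w 3) (w 7) (w 8) (w 6)"
proof -
  let ?M = "Mmat A B"
  have minor: "(l \<bullet> ?M $ j) * (l' \<bullet> ?M $ k) = (l' \<bullet> ?M $ j) * (l \<bullet> ?M $ k)"
    if "?M $ i \<noteq> 0" "l \<bullet> ?M $ i = 0" "l' \<bullet> ?M $ i = 0" for i j k l l'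
    using rank_le_2_functional_minor[OF assms(1) that] .
  have R1: "origin_collinear {w 3, w 7, w 8, w 6}"
    if "?M $ i \<noteq> 0" "?M $ i $ 2 = 0" "?M $ i $ 3 = 0" for i
  proof -
    have "?M $ j $ 2 * ?M $ k $ 3 = ?M $ j $ 3 * ?M $ k $ 2" for j k
      using minor[of i "axis 2 1" "axis 3 1"] that by (simp add: inner_axis')
    from this[of 2 3] this[of 2 4] this[of 2 5] this[of 3 4] this[of 3 5] this[of 4 5] show ?thesis
      by (simp add: origin_collinear_4 det2_eq_0_iff_real Mmat_entries w_def entry_pair_def)
  qed
  have R2: "origin_collinear {w 2, w 4, w 8, w 6}"
    if "?M $ i \<noteq> 0" "?M $ i $ 0 = 0" "?M $ i $ 1 = 0" for i
  proof -
    have "?M $ j $ 0 * ?M $ k $ 1 = ?M $ j $ 1 * ?M $ k $ 0" for j k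
      using minor[of i "axis 0 1" "axis 1 1"] that by (simp add: inner_axis')
    from this[of 0 1] this[of 0 4] this[of 0 5] this[of 1 4] this[of 1 5] this[of 4 5] show ?thesis
      by (simp add: origin_collinear_4 det2_eq_0_iff_real Mmat_entries w_def entry_pair_def)
  qed
  have R3: "origin_collinear {w 2, w 4, w 3, w 7}"
    if "?M $ i \<noteq> 0" "?M $ i $ 0 + ?M $ i $ 2 = 0" "?M $ i $ 1 + ?M $ i $ 3 = 0" for i
  proof -
    have "(?M $ j $ 0 + ?M $ j $ 2) * (?M $ k $ 1 + ?M $ k $ 3) = (?M $ j $ 1 + ?M $ j $ 3) * (?M $ k $ 0 + ?M $ k $ 2)" for j k
      using minor[of i "axis 0 1 + axis 2 1" "axis 1 1 + axis 3 1"] that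
      by (simp add: inner_add_left inner_axis')
    from this[of 0 1] this[of 0 2] this[of 0 3] this[of 1 2] this[of 1 3] this[of 2 3] show ?thesis
      by (simp add: origin_collinear_4 det2_eq_0_iff_real Mmat_entries w_def entry_pair_def)
  qed
  show ?thesis
    unfolding rank_relations_def
    using R1[of 0] R1[of 1] R2[of 2] R2[of 3] R3[of 4] R3[of 5] Mmat_rows_nonzero[of A B]
    by (auto simp: Mmat_entries Pair_eq_0_iff w_def)
qed

section \<open>Counting the reduced parameters\<close>

type_synonym frame = "(v2 \<times> v2) \<times> (v2 \<times> v2) \<times> (v2 \<times> v2)"

definition reduced_params :: "nat \<Rightarrow> (frame \<times> v2 \<times> v2) set" where
  "reduced_params K = {(((w2, w4), (w3, w7), (w8, w6)), y1, y2).
     {w2, w4, w3, w7, w8, w6, y1, y2, y1 - y2} \<subseteq> grid K \<and>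
     comm_equations w2 w4 w3 w7 w8 w6 y1 y2 \<and> rank_relations w2 w4 w3 w7 w8 w6}"

lemma finite_reduced_params [simp]: "finite (reduced_params K)"
proof (rule finite_subset)
  show "reduced_params K \<subseteq> ((grid K \<times> grid K) \<times> (grid K \<times> grid K) \<times> (grid K \<times> grid K)) \<times> grid K \<times> grid K"
    by (auto simp: reduced_params_def)
qed simp

lemma mem_reduced_params:
  "(((w2, w4), (w3, w7), (w8, w6)), y1, y2) \<in> reduced_params K \<longleftrightarrow>
     {w2, w4, w3, w7, w8, w6, y1, y2, y1 - y2} \<subseteq> grid K \<and>
     comm_equations w2 w4 w3 w7 w8 w6 y1 y2 \<and> rank_relations w2 w4 w3 w7 w8 w6"
  by (simp add: reduced_params_def)

lemma card_at_most_one_nonzero_le: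
  "card {((U, V, W), y) \<in> reduced_params K. U = 0 \<and> V = 0 \<or> U = 0 \<and> W = 0 \<or> V = 0 \<and> W = 0}
     \<le> 3 * (2 * K + 1) ^ 8"
  (is "card ?S \<le> _")
proof -
  let ?G = "grid K \<times> grid K"
  let ?X = "{0} \<times> {0} \<times> ?G \<union> {0} \<times> ?G \<times> {0} \<union> ?G \<times> {0} \<times> {0}"
  have "?S \<subseteq> ?X \<times> grid K \<times> grid K"
  proof
    fix x assume "x \<in> ?S"
    obtain w2 w4 w3 w7 w8 w6 y1 y2 where x: "x = (((w2, w4), (w3, w7), (w8, w6)), y1, y2)"
      by (metis prod.collapse)
    from \<open>x \<in> ?S\<close> have "{w2, w4, w3, w7, w8, w6, y1, y2} \<subseteq> grid K"
      and "(w2, w4) = 0 \<and> (w3, w7) = 0 \<or> (w2, w4) = 0 \<and> (w8, w6) = 0 \<or> (w3, w7) = 0 \<and> (w8, w6) = 0"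
      by (simp_all add: x mem_reduced_params)
    then show "x \<in> ?X \<times> grid K \<times> grid K"
      by (simp add: x)
  qed
  then have "card ?S \<le> card (?X \<times> grid K \<times> grid K)"
    by (rule card_mono[rotated]) simp
  also have "\<dots> = card ?X * (2 * K + 1) ^ 4"
    by (simp add: card_cartesian_product card_grid flip: power_add)
  also have "card ?X \<le> card ({0::v2 \<times> v2} \<times> {0::v2 \<times> v2} \<times> ?G) + card ({0::v2 \<times> v2} \<times> ?G \<times> {0::v2 \<times> v2})
      + card (?G \<times> {0::v2 \<times> v2} \<times> {0::v2 \<times> v2})"
    by (intro order_trans[OF card_Un_le] add_mono) simp_all
  also have "\<dots> = 3 * (2 * K + 1) ^ 4"
    by (simp add: card_cartesian_product card_grid flip: power_add)
  finally show ?thesis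
    by (simp add: mult.assoc flip: power_add)
qed

lemma reduced_params_imp_collinear_pairs:
  assumes "((U, V, W), y) \<in> reduced_params K"
  shows "V \<noteq> 0 \<or> W \<noteq> 0 \<Longrightarrow> U \<in> collinear_pairs K"
    and "U \<noteq> 0 \<or> W \<noteq> 0 \<Longrightarrow> V \<in> collinear_pairs K"
    and "U \<noteq> 0 \<or> V \<noteq> 0 \<Longrightarrow> W \<in> collinear_pairs K"
proof -
  obtain w2 w4 w3 w7 w8 w6 y1 y2 where U: "U = (w2, w4)" and V: "V = (w3, w7)" and W: "W = (w8, w6)"
    and y: "y = (y1, y2)"
    by (metis prod.collapse)
  have "{w2, w4, w3, w7, w8, w6} \<subseteq> grid K" and "rank_relations w2 w4 w3 w7 w8 w6"
    using assms by (simp_all add: U V W y mem_reduced_params)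
  then show "V \<noteq> 0 \<or> W \<noteq> 0 \<Longrightarrow> U \<in> collinear_pairs K"
    and "U \<noteq> 0 \<or> W \<noteq> 0 \<Longrightarrow> V \<in> collinear_pairs K"
    and "U \<noteq> 0 \<or> V \<noteq> 0 \<Longrightarrow> W \<in> collinear_pairs K"
    unfolding U V W collinear_pairs_def rank_relations_def origin_collinear_4 by blast+
qed

definition line_U :: "nat \<Rightarrow> frame \<Rightarrow> v2 set" where
  "line_U K = (\<lambda>((w2, w4), (w3, w7), (w8, w6)).
     {y \<in> grid K. det2 w2 y = - det2 w3 w8 \<and> det2 w4 y = det2 w6 w7})"

definition line_V :: "nat \<Rightarrow> frame \<Rightarrow> v2 set" where
  "line_V K = (\<lambda>((w2, w4), (w3, w7), (w8, w6)).
     {y \<in> grid K. det2 w3 y = - det2 w2 w6 \<and> det2 w7 y = det2 w8 w4})"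

definition line_W :: "nat \<Rightarrow> frame \<Rightarrow> v2 set" where
  "line_W K = (\<lambda>((w2, w4), (w3, w7), (w8, w6)).
     {y \<in> grid K. det2 w6 y = det2 w4 w3 \<and> det2 w8 y = - det2 w7 w2})"

lemma reduced_params_imp_mem_lines:
  assumes "(q, y1, y2) \<in> reduced_params K"
  shows "y1 \<in> line_U K q" "y2 \<in> line_V K q" "y1 - y2 \<in> line_W K q"
proof -
  obtain w2 w4 w3 w7 w8 w6 where q: "q = ((w2, w4), (w3, w7), (w8, w6))"
    by (metis prod.collapse)
  from assms show "y1 \<in> line_U K q" "y2 \<in> line_V K q" "y1 - y2 \<in> line_W K q"
    by (auto simp: q mem_reduced_params comm_equations_def line_U_def line_V_def line_W_def)
qed

lemma card_lines_le:
  fixes q :: frame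
  shows "fst q \<noteq> 0 \<Longrightarrow> finite (line_U K q) \<and> card (line_U K q) \<le> 2 * K + 1"
    and "fst (snd q) \<noteq> 0 \<Longrightarrow> finite (line_V K q) \<and> card (line_V K q) \<le> 2 * K + 1"
    and "snd (snd q) \<noteq> 0 \<Longrightarrow> finite (line_W K q) \<and> card (line_W K q) \<le> 2 * K + 1"
proof -
  obtain w2 w4 w3 w7 w8 w6 where q: "q = ((w2, w4), (w3, w7), (w8, w6))"
    by (metis prod.collapse)
  show "fst q \<noteq> 0 \<Longrightarrow> finite (line_U K q) \<and> card (line_U K q) \<le> 2 * K + 1"
    and "fst (snd q) \<noteq> 0 \<Longrightarrow> finite (line_V K q) \<and> card (line_V K q) \<le> 2 * K + 1"
    and "snd (snd q) \<noteq> 0 \<Longrightarrow> finite (line_W K q) \<and> card (line_W K q) \<le> 2 * K + 1"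
    using card_two_lines_le[of w2 w4 K] card_two_lines_le[of w3 w7 K] card_two_lines_le[of w6 w8 K]
    by (auto simp: q line_U_def line_V_def line_W_def Pair_eq_0_iff)
qed

lemma card_collinear_pairs_sq_le: "card (collinear_pairs K) * card (collinear_pairs K) \<le> 4 * (2 * K + 1) ^ 6"
  using mult_le_mono[OF card_collinear_pairs_le card_collinear_pairs_le, of K K]
  by (simp flip: power_add)

lemma card_le_Sigma_product:
  assumes "inj_on f S" "f ` S \<subseteq> (SIGMA q:Q. Y q \<times> Z q)" "finite Q"
    and "\<And>q. q \<in> Q \<Longrightarrow> finite (Y q) \<and> card (Y q) \<le> m"
    and "\<And>q. q \<in> Q \<Longrightarrow> finite (Z q) \<and> card (Z q) \<le> m"
  shows "card S \<le> card Q * m ^ 2"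
proof -
  have "card S = card (f ` S)"
    using card_image[OF assms(1)] by simp
  also have "\<dots> \<le> card (SIGMA q:Q. Y q \<times> Z q)"
    using assms by (intro card_mono[OF _ assms(2)] finite_SigmaI) auto
  also have "\<dots> = (\<Sum>q\<in>Q. card (Y q) * card (Z q))"
    using assms by (simp add: card_cartesian_product)
  also have "\<dots> \<le> (\<Sum>q\<in>Q. m * m)"
    using assms by (intro sum_mono mult_mono) auto
  finally show ?thesis
    by (simp add: power2_eq_square)
qed

lemma card_nonzero_UV_le:
  "card {((U, V, W), y) \<in> reduced_params K. U \<noteq> 0 \<and> V \<noteq> 0 \<and> W = 0} \<le> 4 * (2 * K + 1) ^ 8"
  (is "card ?S \<le> _")
proof -
  let ?C = "collinear_pairs K"
  let ?Q = "{q \<in> ?C \<times> ?C \<times> {0 :: v2 \<times> v2}. fst q \<noteq> 0 \<and> fst (snd q) \<noteq> 0}"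
  have "card ?S \<le> card ?Q * (2 * K + 1) ^ 2"
  proof (rule card_le_Sigma_product[where f = id and Y = "line_U K" and Z = "line_V K"])
    show "id ` ?S \<subseteq> (SIGMA q:?Q. line_U K q \<times> line_V K q)"
    proof (rule image_subsetI)
      fix x assume "x \<in> ?S"
      obtain U V W y1 y2 where x: "x = ((U, V, W), y1, y2)"
        by (metis prod.collapse)
      from \<open>x \<in> ?S\<close> have mem: "((U, V, W), y1, y2) \<in> reduced_params K"
        by (auto simp: x)
      from \<open>x \<in> ?S\<close> have "U \<noteq> 0" "V \<noteq> 0" "W = 0"
        by (simp_all add: x)
      then show "id x \<in> (SIGMA q:?Q. line_U K q \<times> line_V K q)"
        using reduced_params_imp_collinear_pairs[OF mem] reduced_params_imp_mem_lines[OF mem]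
        by (auto simp: x)
    qed
  qed (use card_lines_le in auto)
  also have "card ?Q \<le> 4 * (2 * K + 1) ^ 6"
    using card_collinear_pairs_sq_le[of K] card_mono[of "?C \<times> ?C \<times> {0}" ?Q]
    by (auto simp: card_cartesian_product)
  finally show ?thesis
    by (simp add: mult.assoc flip: power_add)
qed

lemma card_nonzero_UW_le:
  "card {((U, V, W), y) \<in> reduced_params K. U \<noteq> 0 \<and> V = 0 \<and> W \<noteq> 0} \<le> 4 * (2 * K + 1) ^ 8"
  (is "card ?S \<le> _")
proof -
  let ?C = "collinear_pairs K" and ?f = "\<lambda>(q, y1, y2). (q, y1, y1 - y2)"
  let ?Q = "{q \<in> ?C \<times> {0 :: v2 \<times> v2} \<times> ?C. fst q \<noteq> 0 \<and> snd (snd q) \<noteq> 0}"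
  have "card ?S \<le> card ?Q * (2 * K + 1) ^ 2"
  proof (rule card_le_Sigma_product[where f = ?f and Y = "line_U K" and Z = "line_W K"])
    show "inj_on ?f ?S"
      by (rule inj_on_subset[OF _ subset_UNIV]) (rule injI, clarsimp)
    show "?f ` ?S \<subseteq> (SIGMA q:?Q. line_U K q \<times> line_W K q)"
    proof (rule image_subsetI)
      fix x assume "x \<in> ?S"
      obtain U V W y1 y2 where x: "x = ((U, V, W), y1, y2)"
        by (metis prod.collapse)
      from \<open>x \<in> ?S\<close> have mem: "((U, V, W), y1, y2) \<in> reduced_params K"
        by (auto simp: x)
      from \<open>x \<in> ?S\<close> have "U \<noteq> 0" "V = 0" "W \<noteq> 0"
        by (simp_all add: x)
      then show "?f x \<in> (SIGMA q:?Q. line_U K q \<times> line_W K q)"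
        using reduced_params_imp_collinear_pairs[OF mem] reduced_params_imp_mem_lines[OF mem]
        by (auto simp: x)
    qed
  qed (use card_lines_le in auto)
  also have "card ?Q \<le> 4 * (2 * K + 1) ^ 6"
    using card_collinear_pairs_sq_le[of K] card_mono[of "?C \<times> {0} \<times> ?C" ?Q]
    by (auto simp: card_cartesian_product)
  finally show ?thesis
    by (simp add: mult.assoc flip: power_add)
qed

lemma card_nonzero_VW_le:
  "card {((U, V, W), y) \<in> reduced_params K. U = 0 \<and> V \<noteq> 0 \<and> W \<noteq> 0} \<le> 4 * (2 * K + 1) ^ 8"
  (is "card ?S \<le> _")
proof -
  let ?C = "collinear_pairs K" and ?f = "\<lambda>(q, y1, y2). (q, y2, y1 - y2)"
  let ?Q = "{q \<in> {0 :: v2 \<times> v2} \<times> ?C \<times> ?C. fst (snd q) \<noteq> 0 \<and> snd (snd q) \<noteq> 0}"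
  have "card ?S \<le> card ?Q * (2 * K + 1) ^ 2"
  proof (rule card_le_Sigma_product[where f = ?f and Y = "line_V K" and Z = "line_W K"])
    show "inj_on ?f ?S"
      by (rule inj_on_subset[OF _ subset_UNIV]) (rule injI, clarsimp)
    show "?f ` ?S \<subseteq> (SIGMA q:?Q. line_V K q \<times> line_W K q)"
    proof (rule image_subsetI)
      fix x assume "x \<in> ?S"
      obtain U V W y1 y2 where x: "x = ((U, V, W), y1, y2)"
        by (metis prod.collapse)
      from \<open>x \<in> ?S\<close> have mem: "((U, V, W), y1, y2) \<in> reduced_params K"
        by (auto simp: x)
      from \<open>x \<in> ?S\<close> have "U = 0" "V \<noteq> 0" "W \<noteq> 0"
        by (simp_all add: x)
      then show "?f x \<in> (SIGMA q:?Q. line_V K q \<times> line_W K q)"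
        using reduced_params_imp_collinear_pairs[OF mem] reduced_params_imp_mem_lines[OF mem]
        by (auto simp: x)
    qed
  qed (use card_lines_le in auto)
  also have "card ?Q \<le> 4 * (2 * K + 1) ^ 6"
    using card_collinear_pairs_sq_le[of K] card_mono[of "{0} \<times> ?C \<times> ?C" ?Q]
    by (auto simp: card_cartesian_product)
  finally show ?thesis
    by (simp add: mult.assoc flip: power_add)
qed

lemma reduced_params_all_nonzero_imp_collinear:
  assumes "(((w2, w4), (w3, w7), (w8, w6)), y1, y2) \<in> reduced_params K"
    and nz: "(w2, w4) \<noteq> 0" "(w3, w7) \<noteq> 0" "(w8, w6) \<noteq> 0"
  obtains u where "u \<in> {w2, w4}" "u \<noteq> 0" "\<forall>z\<in>{w2, w4, w3, w7, w8, w6, y1, y2}. det2 u z = 0"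
proof -
  have eqs: "comm_equations w2 w4 w3 w7 w8 w6 y1 y2" and "rank_relations w2 w4 w3 w7 w8 w6"
    using assms(1) by (simp_all add: mem_reduced_params)
  then have coll: "origin_collinear {w3, w7, w8, w6}" "origin_collinear {w2, w4, w8, w6}"
    "origin_collinear {w2, w4, w3, w7}"
    using nz by (simp_all add: rank_relations_def)
  obtain u where u: "u \<in> {w2, w4}" "u \<noteq> 0"
    using nz(1) unfolding Pair_eq_0_iff by blast
  obtain v where v: "v \<in> {w3, w7}" "v \<noteq> 0"
    using nz(2) unfolding Pair_eq_0_iff by blast
  have "det2 u z = 0" if "z \<in> {w2, w4, w3, w7, w8, w6}" for z
    using u that coll unfolding origin_collinear_def by blast
  moreover have "det2 u y1 = 0"
    using u eqs coll by (auto simp: comm_equations_def origin_collinear_4 det2_eq_0_commute)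
  moreover have "det2 u y2 = 0"
  proof (rule det2_eq_0_trans[OF v(2)])
    show "det2 v u = 0"
      using u v coll(3) unfolding origin_collinear_def by blast
    show "det2 v y2 = 0"
      using v eqs coll by (auto simp: comm_equations_def origin_collinear_4 det2_eq_0_commute)
  qed
  ultimately show ?thesis
    using that u by auto
qed

lemma card_nonzero_UVW_le:
  "real (card {((U, V, W), y) \<in> reduced_params K. U \<noteq> 0 \<and> V \<noteq> 0 \<and> W \<noteq> 0}) \<le> 25 * (3 * real K) ^ 8"
  (is "real (card ?S) \<le> _")
proof -
  let ?L = "{xs. length xs = 8 \<and> set xs \<subseteq> grid K \<and> (\<exists>u\<in>set xs. u \<noteq> 0 \<and> (\<forall>x\<in>set xs. det2 u x = 0))}"
  let ?f = "\<lambda>(((w2, w4), (w3, w7), (w8, w6)), y1, y2). [w2, w4, w3, w7, w8, w6, y1, y2]"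
  have "inj_on ?f ?S"
    by (rule inj_onI) (auto simp: split_beta prod_eq_iff)
  moreover have "?f ` ?S \<subseteq> ?L"
  proof (rule image_subsetI)
    fix x assume "x \<in> ?S"
    obtain w2 w4 w3 w7 w8 w6 y1 y2 where x: "x = (((w2, w4), (w3, w7), (w8, w6)), y1, y2)"
      by (metis prod.collapse)
    define xs where "xs = [w2, w4, w3, w7, w8, w6, y1, y2]"
    from \<open>x \<in> ?S\<close> have mem: "(((w2, w4), (w3, w7), (w8, w6)), y1, y2) \<in> reduced_params K"
      and "(w2, w4) \<noteq> 0" "(w3, w7) \<noteq> 0" "(w8, w6) \<noteq> 0"
      by (simp_all add: x)
    then obtain u where u: "u \<in> set xs" "u \<noteq> 0" "\<forall>z\<in>set xs. det2 u z = 0"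
      by (rule reduced_params_all_nonzero_imp_collinear) (auto simp: xs_def)
    moreover have "set xs \<subseteq> grid K" "length xs = 8"
      using mem by (simp_all add: xs_def mem_reduced_params)
    moreover have "?f x = xs"
      by (simp add: x xs_def)
    ultimately show "?f x \<in> ?L"
      by blast
  qed
  then have "card (?f ` ?S) \<le> card ?L"
    by (rule card_mono[rotated]) (auto intro: finite_subset[OF _ finite_lists_length_eq[OF finite_grid]])
  ultimately have "real (card ?S) \<le> real (card ?L)"
    by (simp add: card_image)
  also have "\<dots> \<le> 25 * (3 * real K) ^ 8"
    by (rule card_collinear_lists_le) simp
  finally show ?thesis .
qed

lemma card_reduced_params_le:
  assumes "K \<ge> 1"
  shows "real (card (reduced_params K)) \<le> 40 * (3 * real K) ^ 8"
proof -
  let ?P = "reduced_params K"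
  let ?S0 = "{((U, V, W), y) \<in> ?P. U = 0 \<and> V = 0 \<or> U = 0 \<and> W = 0 \<or> V = 0 \<and> W = 0}"
    and ?S1 = "{((U, V, W), y) \<in> ?P. U \<noteq> 0 \<and> V \<noteq> 0 \<and> W = 0}"
    and ?S2 = "{((U, V, W), y) \<in> ?P. U \<noteq> 0 \<and> V = 0 \<and> W \<noteq> 0}"
    and ?S3 = "{((U, V, W), y) \<in> ?P. U = 0 \<and> V \<noteq> 0 \<and> W \<noteq> 0}"
    and ?S4 = "{((U, V, W), y) \<in> ?P. U \<noteq> 0 \<and> V \<noteq> 0 \<and> W \<noteq> 0}"
  have partition: "?P = ?S0 \<union> ?S1 \<union> ?S2 \<union> ?S3 \<union> ?S4"
  proof (rule set_eqI)
    fix x :: "frame \<times> v2 \<times> v2"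
    obtain U V W y where "x = ((U, V, W), y)"
      by (metis prod.collapse)
    then show "x \<in> ?P \<longleftrightarrow> x \<in> ?S0 \<union> ?S1 \<union> ?S2 \<union> ?S3 \<union> ?S4"
      by auto
  qed
  then have "card ?P \<le> card ?S0 + card ?S1 + card ?S2 + card ?S3 + card ?S4"
    using arg_cong[OF partition, of card] card_Un_le[of "?S0 \<union> ?S1 \<union> ?S2 \<union> ?S3" ?S4] card_Un_le[of "?S0 \<union> ?S1 \<union> ?S2" ?S3]
      card_Un_le[of "?S0 \<union> ?S1" ?S2] card_Un_le[of ?S0 ?S1]
    by linarith
  also have "\<dots> \<le> 15 * (2 * K + 1) ^ 8 + card ?S4"
    using card_at_most_one_nonzero_le[of K] card_nonzero_UV_le[of K] card_nonzero_UW_le[of K]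
      card_nonzero_VW_le[of K]
    by linarith
  finally have "real (card ?P) \<le> real (15 * (2 * K + 1) ^ 8) + real (card ?S4)"
    by (simp only: of_nat_le_iff of_nat_add[symmetric])
  also have "\<dots> \<le> 15 * (3 * real K) ^ 8 + 25 * (3 * real K) ^ 8"
  proof -
    have "(2 * real K + 1) ^ 8 \<le> (3 * real K) ^ 8"
      using assms by (intro power_mono) auto
    then show ?thesis
      using card_nonzero_UVW_le[of K] by (simp add: add.commute)
  qed
  finally show ?thesis
    by simp
qed

definition encode :: "(int^3^3) \<times> (int^3^3) \<Rightarrow> v2 \<times> frame \<times> v2 \<times> v2" where
  "encode p = (let w = entry_pair (fst p) (snd p) in
     (w 1, ((w 2, w 4), (w 3, w 7), (w 8, w 6)), w 5 - w 1, w 9 - w 1))"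

lemma inj_encode: "inj encode"
proof (rule injI)
  fix p p' assume eq: "encode p = encode p'"
  obtain A B A' B' where p: "p = (A, B)" and p': "p' = (A', B')"
    by fastforce
  define w w' where "w = entry_pair A B" and "w' = entry_pair A' B'"
  have e: "w 1 = w' 1" "w 2 = w' 2" "w 3 = w' 3" "w 4 = w' 4" "w 6 = w' 6" "w 7 = w' 7" "w 8 = w' 8"
    "w 5 - w 1 = w' 5 - w' 1" "w 9 - w 1 = w' 9 - w' 1"
    using eq unfolding encode_def p p' Let_def fst_conv snd_conv prod.inject
      w_def[symmetric] w'_def[symmetric] by blast+
  moreover have "w 5 = w' 5" "w 9 = w' 9"
    using e(1,8,9) by (metis diff_add_cancel)+
  ultimately have "w k = w' k" if "k \<in> {1..9}" for k
    using that by (auto simp: atLeastAtMost_iff le_Suc_eq numeral_eq_Suc)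
  then have "A = A'" "B = B'"
    by (auto intro: matrix_eqI_ent simp: w_def w'_def entry_pair_def)
  then show "p = p'"
    by (simp add: p p')
qed

lemma encode_mem:
  assumes "p \<in> S2 N"
  shows "encode p \<in> grid N \<times> reduced_params (2 * N)"
proof -
  obtain A B where p: "p = (A, B)"
    by fastforce
  define w where "w = entry_pair A B"
  have "\<bar>A $ i $ j\<bar> \<le> int N" "\<bar>B $ i $ j\<bar> \<le> int N" for i j
    using assms by (auto simp: S2_def p)
  then have "\<bar>ent A k\<bar> \<le> int N" "\<bar>ent B k\<bar> \<le> int N" for k
    by (simp_all add: ent_def)
  then have "w k \<in> grid N" for k
    by (simp add: w_def entry_pair_def mem_grid_iff)
  then have "w k \<in> grid (2 * N)" "w k - w l \<in> grid (2 * N)" for k l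
    by (auto intro: diff_mem_grid grid_mono[of N "2 * N", THEN subsetD])
  moreover have "w 5 - w 1 - (w 9 - w 1) = w 5 - w 9"
    by simp
  moreover have "comm_equations (w 2) (w 4) (w 3) (w 7) (w 8) (w 6) (w 5 - w 1) (w 9 - w 1)"
    using assms commute_imp_comm_equations by (simp add: S2_def p w_def)
  moreover have "rank_relations (w 2) (w 4) (w 3) (w 7) (w 8) (w 6)"
    using assms rank_Mmat_le_2_imp_rank_relations by (simp add: S2_def p w_def)
  ultimately show ?thesis
    using \<open>w 1 \<in> grid N\<close> by (simp add: encode_def p mem_reduced_params flip: w_def)
qed

lemma card_S2_le: "card (S2 N) \<le> (2 * N + 1) ^ 2 * card (reduced_params (2 * N))"
proof -
  have "card (S2 N) = card (encode ` S2 N)"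
    by (rule card_image[symmetric]) (rule inj_on_subset[OF inj_encode subset_UNIV])
  also have "\<dots> \<le> card (grid N \<times> reduced_params (2 * N))"
    by (rule card_mono[OF _ image_subsetI[OF encode_mem]]) simp_all
  also have "\<dots> = (2 * N + 1) ^ 2 * card (reduced_params (2 * N))"
    by (simp add: card_cartesian_product card_grid)
  finally show ?thesis .
qed

theorem lemma4p3:
  shows "\<exists>C>0. \<forall>N::nat. N \<ge> 1 \<longrightarrow> real (card (S2 N)) \<le> C * real N ^ 10"
proof (intro exI[of _ "9 * 40 * 6 ^ 8"] conjI allI impI)
  fix N :: nat assume "N \<ge> 1"
  have "real (card (S2 N)) \<le> real ((2 * N + 1) ^ 2 * card (reduced_params (2 * N)))"
    using card_S2_le[of N] by (simp only: of_nat_le_iff)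
  also have "\<dots> = (2 * real N + 1) ^ 2 * real (card (reduced_params (2 * N)))"
    by simp
  also have "\<dots> \<le> (3 * real N) ^ 2 * (40 * (3 * real (2 * N)) ^ 8)"
    using \<open>N \<ge> 1\<close> card_reduced_params_le[of "2 * N"] by (intro mult_mono power_mono) auto
  also have "\<dots> = 9 * 40 * 6 ^ 8 * real N ^ 10"
    by (simp add: power_mult_distrib flip: power_add)
  finally show "real (card (S2 N)) \<le> 9 * 40 * 6 ^ 8 * real N ^ 10" .
qed simp

end
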